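(* Let $k\ge n\ge 3$, let $\pi$ assign to each $n$-element subset $S\subseteq[k]$ a string $\pi(S)$ of length $n$ that is an ordering of $S$, let $Q\subseteq[k]$ with $|Q|=n-2$, and let $R,R'\in\mathcal U_Q$ be distinct. Suppose $R$ freezes $A_R\subseteq R$ with freezing function $g_R$ and $R'$ freezes $A_{R'}\subseteq R'$ with freezing function $g_{R'}$. Then $g_R(a)=g_{R'}(a)$ for every $a\in A_R\cap A_{R'}$.
   Context: $[k]=\{1,\dots,k\}$; $\pi(S)[i]$ is the letter at position $i\in[n]$ of $\pi(S)$. For a set $R\subseteq[k]$, $\mathcal U_R$ is the set of all sets $S\subseteq[k]$ with $R\subset S$ and $|S|=|R|+1$. For $|R|=n-1$ and $A_R\subseteq R$, $R$ freezes $A_R$ (with freezing function $g_R$) if there is a one-to-one map $g_R:A_R\to[n]$ such that $\pi(S)[g_R(a)]=a$ for all $a\in A_R$ and all $S\in\mathcal U_R$. *)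

theory Defs
  imports Main
begin

text \<open>Strings are lists; position i \<in> [n] of a string w is w ! (i - 1).\<close>

definition pos :: "nat list \<Rightarrow> nat \<Rightarrow> nat" where
  "pos w i = w ! (i - 1)"

definition U :: "nat \<Rightarrow> nat set \<Rightarrow> nat set set" where
  "U k R = {S. S \<subseteq> {1..k} \<and> R \<subset> S \<and> card S = card R + 1}"

definition freezes ::
  "nat \<Rightarrow> nat \<Rightarrow> (nat set \<Rightarrow> nat list) \<Rightarrow> nat set \<Rightarrow> nat set \<Rightarrow> (nat \<Rightarrow> nat) \<Rightarrow> bool" where
  "freezes k n \<pi> R A g \<longleftrightarrow>
     card R = n - 1 \<and> A \<subseteq> R \<and> inj_on g A \<and> g ` A \<subseteq> {1..n} \<and>
     (\<forall>a\<in>A. \<forall>S\<in>U k R. pos (\<pi> S) (g a) = a)"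

end

theory Submission
  imports Defs
begin

text \<open>The two freezing functions are read off the same string: R \<union> R' is an n-set lying in
both U_R and U_R', and \<pi>(R \<union> R') is repetition-free, so a letter occupies only one position.\<close>

lemma U_obtain_insert:
  assumes "R \<in> U k Q" and "finite Q"
  obtains x where "x \<notin> Q" and "R = insert x Q"
proof -
  have "Q \<subset> R" and "card R = card Q + 1" and "finite R"
    using assms by (auto simp: U_def intro: finite_subset)
  then have "card (R - Q) = 1"
    using assms(2) by (simp add: card_Diff_subset psubset_imp_subset)
  then obtain x where "R - Q = {x}"
    by (rule card_1_singletonE)
  with \<open>Q \<subset> R\<close> show thesis
    using that by blast
qed

lemma Un_in_U:
  assumes "R \<in> U k Q" and "R' \<in> U k Q" and "R \<noteq> R'" and "finite Q"
  shows "R \<union> R' \<in> U k R"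
proof -
  obtain x where x: "x \<notin> Q" "R = insert x Q"
    using assms(1,4) by (rule U_obtain_insert)
  obtain y where y: "y \<notin> Q" "R' = insert y Q"
    using assms(2,4) by (rule U_obtain_insert)
  have "x \<noteq> y"
    using x y assms(3) by blast
  then have "R \<union> R' = insert y R" and "y \<notin> R"
    using x y by auto
  moreover have "R \<union> R' \<subseteq> {1..k}" and "finite R"
    using assms(1,2,4) x by (auto simp: U_def)
  ultimately show ?thesis
    by (auto simp: U_def)
qed

lemma pos_inj_distinct:
  assumes "distinct w" and "i \<in> {1..length w}" and "j \<in> {1..length w}"
    and "pos w i = pos w j"
  shows "i = j"
proof -
  have "i - 1 = j - 1"
    using assms nth_eq_iff_index_eq[OF assms(1), of "i - 1" "j - 1"]
    by (auto simp: pos_def)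
  then show ?thesis
    using assms(2,3) by auto
qed

theorem lemma3p7:
  fixes k n :: nat and \<pi> :: "nat set \<Rightarrow> nat list"
    and Q R R' A A' :: "nat set" and g g' :: "nat \<Rightarrow> nat"
  assumes "3 \<le> n" and "n \<le> k"
    and "\<And>S. S \<subseteq> {1..k} \<Longrightarrow> card S = n \<Longrightarrow>
           length (\<pi> S) = n \<and> distinct (\<pi> S) \<and> set (\<pi> S) = S"
    and "Q \<subseteq> {1..k}" and "card Q = n - 2"
    and "R \<in> U k Q" and "R' \<in> U k Q" and "R \<noteq> R'"
    and "freezes k n \<pi> R A g" and "freezes k n \<pi> R' A' g'"
  shows "\<forall>a \<in> A \<inter> A'. g a = g' a"
proof
  fix a assume a: "a \<in> A \<inter> A'"
  define S where "S = R \<union> R'"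
  have "finite Q"
    using assms(4) finite_subset by blast
  have SU: "S \<in> U k R" and SU': "S \<in> U k R'"
    using Un_in_U[OF assms(6-8) \<open>finite Q\<close>] Un_in_U[OF assms(7,6) _ \<open>finite Q\<close>] assms(8)
    by (auto simp: S_def Un_commute)
  have "S \<subseteq> {1..k}" and "card S = n"
    using SU assms(1,5,6) by (auto simp: U_def)
  then have "length (\<pi> S) = n" and "distinct (\<pi> S)"
    using assms(3) by auto
  moreover have "g a \<in> {1..n}" and "pos (\<pi> S) (g a) = a"
    using assms(9) a SU unfolding freezes_def by auto
  moreover have "g' a \<in> {1..n}" and "pos (\<pi> S) (g' a) = a"
    using assms(10) a SU' unfolding freezes_def by auto
  ultimately show "g a = g' a"
    using pos_inj_distinct by metis
qed

end
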